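(* Let $0<\varepsilon<\omega$, let $K\in L^1([-\varepsilon,\varepsilon])$ with $\|K\|_{L^1}=1$ (extended by $0$ outside $[-\varepsilon,\varepsilon]$), let $a\in[0,1]$, and let $\rho=\beta+i\gamma$ with $0\le\beta\le1$, $\gamma\in\mathbb R\setminus\{0\}$. Define $$\Phi_{\omega,\rho,a}=\int_{\omega-\varepsilon}^{\omega+\varepsilon}K(y-\omega)\,y\,e^{(\frac12-a)y}\operatorname{Eit}((a-\rho)y)\,dy,$$ and for integers $j\ge1$ let $F^{(-j)}_{\omega,\rho}(0)=(-1)^j\int_{\omega-\varepsilon}^{\omega+\varepsilon}y^{1-j}K(y-\omega)e^{(\frac12-\rho)y}\,dy$. Then for every integer $k\ge1$, $$\Phi_{\omega,\rho,a}=\sum_{j=1}^k(j-1)!\frac{F^{(-j)}_{\omega,\rho}(0)}{(\rho-a)^j}+\Theta\!\left(\frac{k!\,e^{\varepsilon/2}e^{(\frac12-\beta)\omega}}{(\omega-\varepsilon)^k|\gamma|^{k+1}}\right).$$ Moreover $F^{(-1)}_{\omega,\rho}(0)=-e^{(\frac12-\rho)\omega}\hat K\bigl(\frac\rho i-\frac1{2i}\bigr)$, and if additionally $e\varepsilon<\omega$, then for every integer $j\ge2$ and every integer $m\ge0$, $$F^{(-j)}_{\omega,\rho}(0)=(-1)^je^{(\frac12-\rho)\omega}\sum_{n=0}^m\binom{n+j-2}{n}\frac{(-i)^n\hat K^{(n)}(\frac\rho i-\frac1{2i})}{\omega^{n+j-1}}+\Theta\!\left(\frac{e^{j-2+\v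arepsilon/2}e^{(\frac12-\beta)\omega}}{\omega^{j-1}}\cdot\frac{(e\varepsilon/\omega)^{m+1}}{1-e\varepsilon/\omega}\right).$$
   Context: $\operatorname{Eit}(z)=\int_0^\infty\frac{e^{z-t}}{z-t}\,dt$ for complex $z\notin[0,\infty)$. The Fourier transform is $\hat K(z)=\int_{-\infty}^\infty K(t)e^{-itz}\,dt$, defined for all complex $z$ since $K$ has compact support, and $\hat K^{(n)}$ is its $n$-th derivative. The notation $f=g+\Theta(B)$ means $|f-g|\le B$. *)

theory Defs
  imports "HOL-Analysis.Analysis"
begin

definition Eit :: "complex \<Rightarrow> complex" where
  "Eit z = (LINT t:{0..}|lborel. exp (z - complex_of_real t) / (z - complex_of_real t))"

definition Khat :: "(real \<Rightarrow> complex) \<Rightarrow> complex \<Rightarrow> complex" where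
  "Khat K z = (LINT t|lborel. K t * exp (- \<i> * complex_of_real t * z))"

definition Phi :: "(real \<Rightarrow> complex) \<Rightarrow> real \<Rightarrow> real \<Rightarrow> complex \<Rightarrow> real \<Rightarrow> complex" where
  "Phi K \<epsilon> \<omega> \<rho> a = (LINT y:{\<omega>-\<epsilon>..\<omega>+\<epsilon>}|lborel.
      K (y - \<omega>) * complex_of_real y * exp (complex_of_real ((1/2 - a) * y))
        * Eit ((complex_of_real a - \<rho>) * complex_of_real y))"

definition Fneg :: "(real \<Rightarrow> complex) \<Rightarrow> real \<Rightarrow> real \<Rightarrow> complex \<Rightarrow> nat \<Rightarrow> complex" where
  "Fneg K \<epsilon> \<omega> \<rho> j = (-1) ^ j * (LINT y:{\<omega>-\<epsilon>..\<omega>+\<epsilon>}|lborel.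
      complex_of_real (1 / y ^ (j - 1)) * K (y - \<omega>) * exp ((1/2 - \<rho>) * complex_of_real y))"

end

theory Submission
  imports Defs "HOL-Probability.Sinc_Integral"
begin

text \<open>Integrating by parts k times gives
  Eit z = sum_{j=1..k} (j-1)! e^z / z^j + k! int_0^oo e^(z-t) / (z-t)^(k+1) dt,
  and since |z - t| >= |Im z| the remainder is at most k! e^(Re z) / |Im z|^(k+1).
  With z = (a - rho) y, the j-th term of y e^((1/2-a) y) Eit z integrates against K(y - omega)
  to (j-1)! F^(-j)(0) / (rho - a)^j, and as K has unit mass the pointwise bound of the remainder
  on [omega - eps, omega + eps] gives the expansion of Phi.

  For F^(-j)(0) substitute y = omega + t: then e^((1/2-rho) y) = e^((1/2-rho) omega) e^(-i t w)
  with w = rho/i - 1/(2i), and (omega + t)^(1-j) is expanded in the negative binomial series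
  in t/omega. Its n-th term integrates to a multiple of the n-th derivative of the Fourier
  transform of K at w (differentiation under the integral sign is harmless since K has compact
  support), and bounding the binomial coefficients by powers of e turns the tail into a
  geometric series of ratio e eps/omega.\<close>

lemma exp_neg_set_integral:
  "set_integrable lborel {0<..} (\<lambda>t::real. exp (- t))" "(LINT t:{0<..}|lborel. exp (- t :: real)) = 1"
proof -
  have "has_bochner_integral lborel (\<lambda>t. indicator {0<..} t *\<^sub>R exp (- t)) (1::real)"
    using has_bochner_integral_I0i_power_exp_m[of 0] by (simp add: mult.commute)
  then show "set_integrable lborel {0<..} (\<lambda>t::real. exp (- t))" "(LINT t:{0<..}|lborel. exp (- t :: real)) = 1"
    unfolding set_integrable_def set_lebesgue_integral_def has_bochner_integral_iff by simp_all
qed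

lemma has_field_derivative_exp_div_power:
  fixes z w :: complex
  assumes "z \<noteq> w"
  shows "((\<lambda>w. exp (z - w) / (z - w) ^ Suc k) has_field_derivative
           of_nat (Suc k) * (exp (z - w) / (z - w) ^ (Suc k + 1)) - exp (z - w) / (z - w) ^ Suc k) (at w)"
proof -
  have "((\<lambda>w. exp (z - w) / (z - w) ^ Suc k) has_field_derivative
      ((- exp (z - w)) * (z - w) ^ Suc k - exp (z - w) * (of_nat (Suc k) * (z - w) ^ k * (-1)))
        / ((z - w) ^ Suc k * (z - w) ^ Suc k)) (at w)"
    using assms by (intro DERIV_divide derivative_eq_intros) auto
  moreover have "(- e * u ^ Suc k - e * (of_nat (Suc k) * u ^ k * (-1))) / (u ^ Suc k * u ^ Suc k)
      = of_nat (Suc k) * (e / u ^ (Suc k + 1)) - e / u ^ Suc k" if "u \<noteq> 0" for e u :: complex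
    using that by (simp add: power_Suc field_simps)
  ultimately show ?thesis using assms by simp
qed

lemma has_field_derivative_exp_times_sum_fact_div_power:
  fixes z w :: complex
  assumes "z \<noteq> w"
  shows "((\<lambda>w. exp (z - w) * (\<Sum>j=1..k. fact (j - 1) / (z - w) ^ j)) has_field_derivative
           fact k * (exp (z - w) / (z - w) ^ (k + 1)) - exp (z - w) / (z - w)) (at w)"
proof (induction k)
  case 0
  then show ?case by simp
next
  case (Suc k)
  have sum_Suc: "(\<lambda>w. exp (z - w) * (\<Sum>j=1..Suc k. fact (j - 1) / (z - w) ^ j))
      = (\<lambda>w. exp (z - w) * (\<Sum>j=1..k. fact (j - 1) / (z - w) ^ j) + fact k * (exp (z - w) / (z - w) ^ Suc k))"
    by (rule ext) (simp add: distrib_left)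
  have last_term: "((\<lambda>w. fact k * (exp (z - w) / (z - w) ^ Suc k)) has_field_derivative
      fact (Suc k) * (exp (z - w) / (z - w) ^ (Suc k + 1)) - fact k * (exp (z - w) / (z - w) ^ Suc k)) (at w)"
    using DERIV_cmult[OF has_field_derivative_exp_div_power[OF assms, of k], of "fact k"]
    by (simp add: algebra_simps)
  show ?case
    unfolding sum_Suc using DERIV_add[OF Suc.IH last_term] by (simp add: algebra_simps)
qed

lemma norm_exp_div_power_le:
  fixes z :: complex
  assumes "Im z \<noteq> 0"
  shows "norm (exp (z - of_real t) / (z - of_real t) ^ p) \<le> exp (Re z) / \<bar>Im z\<bar> ^ p * exp (- t)"
proof -
  have "\<bar>Im z\<bar> ^ p \<le> norm (z - of_real t) ^ p"
    using abs_Im_le_cmod[of "z - of_real t"] by (intro power_mono) auto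
  moreover have "\<bar>Im z\<bar> ^ p > 0" using assms by simp
  ultimately have "norm (exp (z - of_real t) / (z - of_real t) ^ p) \<le> exp (Re z - t) / \<bar>Im z\<bar> ^ p"
    by (simp add: norm_divide norm_power frac_le)
  then show ?thesis by (simp add: exp_diff exp_minus field_simps)
qed

lemma exp_div_power_set_integrable:
  fixes z :: complex
  assumes "Im z \<noteq> 0"
  shows "set_integrable lborel {0<..} (\<lambda>t. exp (z - of_real t) / (z - of_real t) ^ p)"
proof -
  have "set_integrable lborel {0<..} (\<lambda>t. exp (Re z) / \<bar>Im z\<bar> ^ p * exp (- t))"
    using exp_neg_set_integral(1) by (intro set_integrable_mult_right) auto
  then show ?thesis
    unfolding set_integrable_def
    by (rule Bochner_Integration.integrable_bound)
       (use norm_exp_div_power_le[OF assms] in \<open>auto simp: indicator_def\<close>)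
qed

lemma norm_exp_div_power_set_integral_le:
  fixes z :: complex
  assumes "Im z \<noteq> 0"
  shows "norm (LINT t:{0<..}|lborel. exp (z - of_real t) / (z - of_real t) ^ p) \<le> exp (Re z) / \<bar>Im z\<bar> ^ p"
proof -
  have "norm (LINT t:{0<..}|lborel. exp (z - of_real t) / (z - of_real t) ^ p)
      \<le> (LINT t:{0<..}|lborel. norm (exp (z - of_real t) / (z - of_real t) ^ p))"
    by (rule set_integral_norm_bound[OF exp_div_power_set_integrable[OF assms]])
  also have "\<dots> \<le> (LINT t:{0<..}|lborel. exp (Re z) / \<bar>Im z\<bar> ^ p * exp (- t))"
    using exp_div_power_set_integrable[OF assms] exp_neg_set_integral(1) norm_exp_div_power_le[OF assms]
    by (intro set_integral_mono) (auto simp: set_integrable_norm)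
  also have "\<dots> = exp (Re z) / \<bar>Im z\<bar> ^ p" using exp_neg_set_integral(2) by simp
  finally show ?thesis .
qed

lemma Eit_eq_set_integral_Ioi:
  fixes z :: complex
  assumes "Im z \<noteq> 0"
  shows "Eit z = (LINT t:{0<..}|lborel. exp (z - of_real t) / (z - of_real t))"
proof -
  have "Eit z = (LINT t:{0..}|lborel. exp (z - of_real t) / (z - of_real t) ^ 1)"
    unfolding Eit_def by simp
  also have "\<dots> = (LINT t:{0<..}|lborel. exp (z - of_real t) / (z - of_real t) ^ 1)"
  proof (rule set_integral_cong_set)
    show "AE t in lborel. (t \<in> {0<..}) = (t \<in> {0::real..})"
      using AE_lborel_singleton[of "0::real"] by eventually_elim auto
  qed (unfold set_borel_measurable_def, measurable)+
  finally show ?thesis by simp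
qed

lemma exp_times_sum_fact_div_power_tendsto_zero:
  fixes z :: complex
  assumes z: "Im z \<noteq> 0"
  shows "((\<lambda>t. exp (z - of_real t) * (\<Sum>j=1..k. fact (j - 1) / (z - of_real t) ^ j)) \<longlongrightarrow> 0) at_top"
proof (rule Lim_null_comparison)
  define C where "C = (\<Sum>j=1..k. fact (j - 1) * (exp (Re z) / \<bar>Im z\<bar> ^ j))"
  show "\<forall>\<^sub>F t in at_top. norm (exp (z - of_real t) * (\<Sum>j=1..k. fact (j - 1) / (z - of_real t) ^ j))
          \<le> C * exp (- t)"
  proof (intro always_eventually allI)
    fix t :: real
    have "norm (exp (z - of_real t) * (\<Sum>j=1..k. fact (j - 1) / (z - of_real t) ^ j))
        = norm (\<Sum>j=1..k. fact (j - 1) * (exp (z - of_real t) / (z - of_real t) ^ j))"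
      by (simp add: sum_distrib_left mult.commute)
    also have "\<dots> \<le> (\<Sum>j=1..k. fact (j - 1) * (exp (Re z) / \<bar>Im z\<bar> ^ j * exp (- t)))"
    proof (intro order.trans[OF norm_sum] sum_mono)
      fix j
      show "norm (fact (j - 1) * (exp (z - of_real t) / (z - of_real t) ^ j))
          \<le> fact (j - 1) * (exp (Re z) / \<bar>Im z\<bar> ^ j * exp (- t))"
        unfolding norm_mult norm_fact by (intro mult_left_mono norm_exp_div_power_le[OF z]) auto
    qed
    finally show "norm (exp (z - of_real t) * (\<Sum>j=1..k. fact (j - 1) / (z - of_real t) ^ j)) \<le> C * exp (- t)"
      unfolding C_def by (simp add: sum_distrib_right mult.assoc)
  qed
  show "((\<lambda>t. C * exp (- t)) \<longlongrightarrow> 0) at_top"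
    by (intro tendsto_mult_right_zero filterlim_compose[OF exp_at_bot filterlim_uminus_at_bot_at_top])
qed

lemma Eit_eq_sum_plus_remainder:
  fixes z :: complex
  assumes z: "Im z \<noteq> 0"
  shows "Eit z = (\<Sum>j=1..k. fact (j - 1) * exp z / z ^ j)
           + fact k * (LINT t:{0<..}|lborel. exp (z - of_real t) / (z - of_real t) ^ (k + 1))"
proof -
  define f where "f p t = exp (z - of_real t) / (z - of_real t) ^ p" for p t
  define H where "H w = exp (z - w) * (\<Sum>j=1..k. fact (j - 1) / (z - w) ^ j)" for w
  define H' where "H' t = fact k * f (k + 1) t - f 1 t" for t
  have ne: "z \<noteq> of_real t" for t using z by auto
  have f_int: "set_integrable lborel {0<..} (f p)" for p
    unfolding f_def using exp_div_power_set_integrable[OF z] .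
  have H_deriv: "((\<lambda>t. H (of_real t)) has_vector_derivative H' t) (at t)" for t
    unfolding H_def H'_def f_def
    by (rule has_vector_derivative_real_field)
       (use has_field_derivative_exp_times_sum_fact_div_power[OF ne[of t]] in simp)
  have H_cont: "isCont (\<lambda>t. H (of_real t)) t" for t
    unfolding H_def using ne[of t] by (intro continuous_intros) auto
  have H_at_0: "(((\<lambda>t. H (of_real t)) \<circ> real_of_ereal) \<longlongrightarrow> H 0) (at_right 0)"
    unfolding zero_ereal_def ereal_tendsto_simps
    using H_cont[of 0] unfolding isCont_def by (auto intro: tendsto_mono[OF at_le])
  have H_at_top: "(((\<lambda>t. H (of_real t)) \<circ> real_of_ereal) \<longlongrightarrow> 0) (at_left \<infinity>)"
    unfolding ereal_tendsto_simps H_def using exp_times_sum_fact_div_power_tendsto_zero[OF z] .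
  have H'_int: "set_integrable lborel (einterval 0 \<infinity>) H'"
    unfolding H'_def using f_int by (simp add: zero_ereal_def)
  have H'_cont: "isCont H' t" for t
    unfolding H'_def f_def using ne[of t] by (intro continuous_intros) auto
  have "(LBINT t=0..\<infinity>. H' t) = 0 - H 0"
    by (rule interval_integral_FTC_integrable[OF _ _ _ H'_int H_at_0 H_at_top]) (auto intro: H_deriv H'_cont)
  then have "(LINT t:{0<..}|lborel. H' t) = - H 0"
    by (simp add: interval_lebesgue_integral_0_infty)
  then have "(LINT t:{0<..}|lborel. f 1 t) = fact k * (LINT t:{0<..}|lborel. f (k + 1) t) + H 0"
    using f_int unfolding H'_def by (simp add: set_integral_diff algebra_simps)
  moreover have "H 0 = (\<Sum>j=1..k. fact (j - 1) * exp z / z ^ j)"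
    unfolding H_def by (simp add: sum_distrib_left field_simps)
  ultimately show ?thesis unfolding Eit_eq_set_integral_Ioi[OF z] f_def by simp
qed

lemma norm_Eit_minus_sum_le:
  fixes z :: complex
  assumes z: "Im z \<noteq> 0"
  shows "norm (Eit z - (\<Sum>j=1..k. fact (j - 1) * exp z / z ^ j)) \<le> fact k * exp (Re z) / \<bar>Im z\<bar> ^ (k + 1)"
proof -
  have "norm (Eit z - (\<Sum>j=1..k. fact (j - 1) * exp z / z ^ j))
     = fact k * norm (LINT t:{0<..}|lborel. exp (z - of_real t) / (z - of_real t) ^ (k + 1))"
    unfolding Eit_eq_sum_plus_remainder[OF z, of k] by (simp add: norm_mult norm_fact)
  also have "\<dots> \<le> fact k * (exp (Re z) / \<bar>Im z\<bar> ^ (k + 1))"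
    by (rule mult_left_mono[OF norm_exp_div_power_set_integral_le[OF z]]) auto
  finally show ?thesis by simp
qed

lemma negative_binomial_sums:
  fixes x :: real
  assumes "k \<ge> 1" "\<bar>x\<bar> < 1"
  shows "(\<lambda>n. real ((n + k - 1) choose n) * (- x) ^ n) sums (1 / (1 + x) ^ k)"
proof -
  have "(\<lambda>n. ((- real k) gchoose n) * x ^ n) sums (1 + x) powr (- real k)"
    by (rule gen_binomial_real) (use assms in auto)
  moreover have "((- real k) gchoose n) * x ^ n = real ((n + k - 1) choose n) * (- x) ^ n" for n
  proof -
    have "((- real k) gchoose n) = (-1) ^ n * ((real k + real n - 1) gchoose n)"
      by (rule gbinomial_minus)
    also have "real k + real n - 1 = real (n + k - 1)" using assms by simp
    also have "(real (n + k - 1) gchoose n) = real ((n + k - 1) choose n)"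
      by (simp add: binomial_gbinomial)
    finally show ?thesis by (simp add: power_minus')
  qed
  moreover have "(1 + x) powr (- real k) = 1 / (1 + x) ^ k"
    using assms by (simp add: powr_minus powr_realpow divide_inverse)
  ultimately show ?thesis by simp
qed

lemma binomial_le_exp_power: "real ((n + k) choose n) \<le> exp 1 ^ (n + k)"
proof -
  have "real ((n + k) choose n) \<le> 2 ^ (n + k)"
    using binomial_le_pow2[of "n + k" n] by (metis of_nat_le_iff of_nat_numeral of_nat_power)
  also have "(2::real) ^ (n + k) \<le> exp 1 ^ (n + k)"
    by (rule power_mono) (use exp_ge_add_one_self[of 1] in auto)
  finally show ?thesis .
qed

lemma negative_binomial_remainder_le:
  fixes x r :: real
  assumes k: "k \<ge> 1" and x: "\<bar>x\<bar> \<le> r" and r: "exp 1 * r < 1"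
  shows "\<bar>1 / (1 + x) ^ k - (\<Sum>n=0..m. real ((n + k - 1) choose n) * (- x) ^ n)\<bar>
          \<le> exp 1 ^ (k - 1) * ((exp 1 * r) ^ (m + 1) / (1 - exp 1 * r))"
proof -
  define s where "s n = real ((n + k - 1) choose n) * (- x) ^ n" for n
  define q where "q = exp 1 * r"
  define C where "C = exp 1 ^ (k - 1) * q ^ (m + 1)"
  have q0: "0 \<le> q" and q1: "q < 1" using x r unfolding q_def by auto
  have "r \<le> q" using x unfolding q_def by (simp add: mult_le_cancel_right1)
  then have s_sums: "s sums (1 / (1 + x) ^ k)"
    unfolding s_def using negative_binomial_sums[OF k, of x] x q1 by simp
  have tail: "(\<lambda>n. s (n + (m + 1))) sums (1 / (1 + x) ^ k - (\<Sum>n<m + 1. s n))"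
    by (rule sums_split_initial_segment[OF s_sums])
  have s_le: "\<bar>s (n + (m + 1))\<bar> \<le> C * q ^ n" for n
  proof -
    have "\<bar>s (n + (m + 1))\<bar> = real ((n + (m + 1) + (k - 1)) choose (n + (m + 1))) * \<bar>x\<bar> ^ (n + (m + 1))"
      unfolding s_def using k by (simp add: abs_mult power_abs)
    also have "\<dots> \<le> exp 1 ^ (n + (m + 1) + (k - 1)) * r ^ (n + (m + 1))"
      by (intro mult_mono binomial_le_exp_power power_mono) (use x in auto)
    also have "\<dots> = C * q ^ n"
      unfolding C_def q_def by (simp add: power_add power_mult_distrib)
    finally show ?thesis .
  qed
  have geo: "(\<lambda>n. C * q ^ n) sums (C * (1 / (1 - q)))"
    by (intro sums_mult geometric_sums) (use q0 q1 in auto)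
  have tail_summable: "summable (\<lambda>n. \<bar>s (n + (m + 1))\<bar>)"
    by (rule summable_rabs_comparison_test[OF _ sums_summable[OF geo]]) (use s_le in auto)
  have "\<bar>1 / (1 + x) ^ k - (\<Sum>n<m + 1. s n)\<bar> = \<bar>\<Sum>n. s (n + (m + 1))\<bar>"
    using sums_unique[OF tail] by simp
  also have "\<dots> \<le> (\<Sum>n. \<bar>s (n + (m + 1))\<bar>)"
    by (rule summable_rabs[OF tail_summable])
  also have "\<dots> \<le> (\<Sum>n. C * q ^ n)"
    by (rule suminf_le[OF s_le tail_summable sums_summable[OF geo]])
  also have "\<dots> = C * (1 / (1 - q))"
    using sums_unique[OF geo] by simp
  finally show ?thesis
    unfolding s_def C_def q_def by (simp add: atLeast0AtMost lessThan_Suc_atMost)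
qed

lemma norm_exp_minus_one_minus_le:
  fixes u :: complex
  assumes "norm u \<le> 1"
  shows "norm (exp u - 1 - u) \<le> norm u ^ 2"
proof -
  have "exp u - 1 - u = (\<Sum>n. inverse (fact (n + 2)) *\<^sub>R u ^ (n + 2))"
    using exp_first_two_terms[of u] by simp
  moreover have "norm (inverse (fact (n + 2)) *\<^sub>R u ^ (n + 2)) = inverse (fact (n + 2)) * norm u ^ (n + 2)" for n
    by (simp add: norm_power norm_mult del: power_Suc)
  moreover have "summable (\<lambda>n. inverse (fact (n + 2)) * norm u ^ (n + 2))"
    by (rule summable_exp[THEN summable_ignore_initial_segment])
  ultimately have "norm (exp u - 1 - u) \<le> (\<Sum>n. inverse (fact (n + 2)) * norm u ^ (n + 2))"
    using summable_norm[of "\<lambda>n. inverse (fact (n + 2)) *\<^sub>R u ^ (n + 2)"] by simp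
  also have "\<dots> = exp (norm u) - 1 - norm u"
    using exp_first_two_terms[of "norm u"] by simp
  also have "\<dots> \<le> norm u ^ 2" using exp_bound[of "norm u"] assms by simp
  finally show ?thesis .
qed

lemma half_minus_mult_le:
  fixes \<beta> s \<epsilon> :: real
  assumes "0 \<le> \<beta>" "\<beta> \<le> 1" "\<bar>s\<bar> \<le> \<epsilon>"
  shows "(1/2 - \<beta>) * s \<le> \<epsilon> / 2"
proof -
  have "\<bar>1/2 - \<beta>\<bar> \<le> 1/2" unfolding abs_le_iff using assms by auto
  then have "\<bar>1/2 - \<beta>\<bar> * \<bar>s\<bar> \<le> 1/2 * \<epsilon>"
    using assms by (intro mult_mono) auto
  moreover have "(1/2 - \<beta>) * s \<le> \<bar>1/2 - \<beta>\<bar> * \<bar>s\<bar>"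
    unfolding abs_mult[symmetric] by (rule abs_ge_self)
  ultimately show ?thesis by linarith
qed

lemma inverse_power_expansion_remainder_le:
  fixes \<epsilon> \<omega> t :: real
  assumes \<epsilon>: "0 \<le> \<epsilon>" and \<omega>: "exp 1 * \<epsilon> < \<omega>" and j: "j \<ge> 2" and t: "\<bar>t\<bar> \<le> \<epsilon>"
  shows "\<bar>1 / (t + \<omega>) ^ (j - 1) - (\<Sum>n=0..m. real ((n + j - 2) choose n) * (- t) ^ n / \<omega> ^ (n + j - 1))\<bar>
     \<le> exp 1 ^ (j - 2) / \<omega> ^ (j - 1) * ((exp 1 * \<epsilon> / \<omega>) ^ (m + 1) / (1 - exp 1 * \<epsilon> / \<omega>))"
proof -
  have "\<epsilon> \<le> exp 1 * \<epsilon>" using \<epsilon> by (simp add: mult_le_cancel_right1)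
  then have \<omega>0: "\<omega> > 0" using \<omega> \<epsilon> by linarith
  define x where "x = t / \<omega>"
  have x: "\<bar>x\<bar> \<le> \<epsilon> / \<omega>" unfolding x_def using t \<omega>0 by (simp add: abs_div divide_right_mono)
  have r: "exp 1 * (\<epsilon> / \<omega>) < 1" using \<omega> \<omega>0 by (simp add: field_simps)
  have term_eq: "real ((n + j - 2) choose n) * (- t) ^ n / \<omega> ^ (n + j - 1)
      = 1 / \<omega> ^ (j - 1) * (real ((n + (j - 1) - 1) choose n) * (- x) ^ n)" for n
  proof -
    have "n + j - 1 = n + (j - 1)" "n + j - 2 = n + (j - 1) - 1" using j by simp_all
    moreover have "- t = \<omega> * (- x)" unfolding x_def using \<omega>0 by simp
    then have "(- t) ^ n = \<omega> ^ n * (- x) ^ n" by (metis power_mult_distrib)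
    ultimately show ?thesis using \<omega>0 by (simp add: power_add)
  qed
  have "t + \<omega> = \<omega> * (1 + x)" unfolding x_def using \<omega>0 by (simp add: field_simps)
  then have "1 / (t + \<omega>) ^ (j - 1) = 1 / \<omega> ^ (j - 1) * (1 / (1 + x) ^ (j - 1))"
    by (simp add: power_mult_distrib)
  then have "1 / (t + \<omega>) ^ (j - 1) - (\<Sum>n=0..m. real ((n + j - 2) choose n) * (- t) ^ n / \<omega> ^ (n + j - 1))
      = 1 / \<omega> ^ (j - 1) * (1 / (1 + x) ^ (j - 1) - (\<Sum>n=0..m. real ((n + (j - 1) - 1) choose n) * (- x) ^ n))"
    unfolding term_eq sum_distrib_left[symmetric] right_diff_distrib by simp
  then have "\<bar>1 / (t + \<omega>) ^ (j - 1) - (\<Sum>n=0..m. real ((n + j - 2) choose n) * (- t) ^ n / \<omega> ^ (n + j - 1))\<bar>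
      = 1 / \<omega> ^ (j - 1) * \<bar>1 / (1 + x) ^ (j - 1) - (\<Sum>n=0..m. real ((n + (j - 1) - 1) choose n) * (- x) ^ n)\<bar>"
    using \<omega>0 by (simp add: abs_mult)
  also have "\<dots> \<le> 1 / \<omega> ^ (j - 1) * (exp 1 ^ (j - 1 - 1) * ((exp 1 * (\<epsilon> / \<omega>)) ^ (m + 1) / (1 - exp 1 * (\<epsilon> / \<omega>))))"
    by (intro mult_left_mono negative_binomial_remainder_le[OF _ x r]) (use j \<omega>0 in auto)
  also have "\<dots> = exp 1 ^ (j - 2) / \<omega> ^ (j - 1) * ((exp 1 * \<epsilon> / \<omega>) ^ (m + 1) / (1 - exp 1 * \<epsilon> / \<omega>))"
  proof -
    have "j - 1 - 1 = j - 2" by simp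
    then show ?thesis by (simp only: times_divide_eq_right times_divide_eq_left mult_1_left mult_1_right)
  qed
  finally show ?thesis .
qed

lemma Fneg_integrand_remainder_le:
  fixes \<epsilon> \<omega> \<beta> \<gamma> t :: real
  assumes \<epsilon>: "0 \<le> \<epsilon>" and \<omega>: "exp 1 * \<epsilon> < \<omega>" and j: "j \<ge> 2"
    and \<beta>: "0 \<le> \<beta>" "\<beta> \<le> 1" and t: "\<bar>t\<bar> \<le> \<epsilon>"
  defines "\<rho> \<equiv> Complex \<beta> \<gamma>"
  shows "norm (of_real (1 / (t + \<omega>) ^ (j - 1) - (\<Sum>n=0..m. real ((n + j - 2) choose n) * (- t) ^ n / \<omega> ^ (n + j - 1)))
               * exp ((1/2 - \<rho>) * of_real t))
     \<le> exp 1 ^ (j - 2) / \<omega> ^ (j - 1) * ((exp 1 * \<epsilon> / \<omega>) ^ (m + 1) / (1 - exp 1 * \<epsilon> / \<omega>)) * exp (\<epsilon> / 2)"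
proof -
  have "norm (exp ((1/2 - \<rho>) * of_real t)) \<le> exp (\<epsilon> / 2)"
    unfolding \<rho>_def using half_minus_mult_le[OF \<beta> t] by simp
  with inverse_power_expansion_remainder_le[OF \<epsilon> \<omega> j t, of m] show ?thesis
    unfolding norm_mult norm_of_real by (intro mult_mono) auto
qed

lemma Eit_series_term_eq:
  fixes y a :: real and \<rho> :: complex
  assumes y: "y > 0" and j: "j \<ge> 1" and a: "complex_of_real a \<noteq> \<rho>"
  shows "of_real y * exp (of_real ((1/2 - a) * y)) *
           (fact (j - 1) * exp ((of_real a - \<rho>) * of_real y) / ((of_real a - \<rho>) * of_real y) ^ j)
       = fact (j - 1) * ((-1) ^ j * (of_real (1 / y ^ (j - 1)) * exp ((1/2 - \<rho>) * of_real y)))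
           / (\<rho> - of_real a) ^ j"
proof -
  define c where "c = complex_of_real a - \<rho>"
  have exp_eq: "exp (complex_of_real ((1/2 - a) * y)) * exp (c * complex_of_real y) = exp ((1/2 - \<rho>) * complex_of_real y)"
    unfolding c_def exp_add[symmetric] by (simp add: algebra_simps)
  have pow_eq: "(\<rho> - complex_of_real a) ^ j = (-1) ^ j * c ^ j"
    unfolding c_def by (metis minus_diff_eq mult_minus1 power_mult_distrib)
  obtain i where i: "j = Suc i" using j by (cases j) auto
  have "complex_of_real y \<noteq> 0" "c \<noteq> 0" using y a unfolding c_def by auto
  then show ?thesis
    unfolding c_def[symmetric] pow_eq using exp_eq[symmetric] unfolding i
    by (simp add: field_simps power_mult_distrib)
qed

lemma Phi_integrand_remainder_le:
  fixes \<epsilon> \<omega> a \<beta> \<gamma> y :: real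
  assumes \<omega>: "\<epsilon> < \<omega>" and \<beta>: "0 \<le> \<beta>" "\<beta> \<le> 1" and \<gamma>: "\<gamma> \<noteq> 0" and y: "\<bar>y - \<omega>\<bar> \<le> \<epsilon>"
  defines "\<rho> \<equiv> Complex \<beta> \<gamma>"
  shows "norm (of_real y * exp (of_real ((1/2 - a) * y)) * Eit ((of_real a - \<rho>) * of_real y)
           - (\<Sum>j=1..k. fact (j - 1) * ((-1) ^ j * (of_real (1 / y ^ (j - 1)) * exp ((1/2 - \<rho>) * of_real y)))
                         / (\<rho> - of_real a) ^ j))
         \<le> fact k * exp (\<epsilon> / 2) * exp ((1/2 - \<beta>) * \<omega>) / ((\<omega> - \<epsilon>) ^ k * \<bar>\<gamma>\<bar> ^ (k + 1))"
proof -
  define z where "z = (complex_of_real a - \<rho>) * complex_of_real y"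
  have y0: "y > 0" and y_ge: "\<omega> - \<epsilon> \<le> y" using y \<omega> by auto
  have a\<rho>: "complex_of_real a \<noteq> \<rho>" using \<gamma> unfolding \<rho>_def by (auto simp: complex_eq_iff)
  have Re_z: "Re z = (a - \<beta>) * y" and Im_z: "\<bar>Im z\<bar> = \<bar>\<gamma>\<bar> * y"
    unfolding z_def \<rho>_def using y0 by (auto simp: abs_mult)
  have sum_eq: "(\<Sum>j=1..k. fact (j - 1) * ((-1) ^ j * (of_real (1 / y ^ (j - 1)) * exp ((1/2 - \<rho>) * of_real y)))
                         / (\<rho> - of_real a) ^ j)
      = of_real y * exp (of_real ((1/2 - a) * y)) * (\<Sum>j=1..k. fact (j - 1) * exp z / z ^ j)"
    unfolding sum_distrib_left z_def using Eit_series_term_eq[OF y0 _ a\<rho>] by (intro sum.cong) auto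
  have "norm (of_real y * exp (of_real ((1/2 - a) * y)) * Eit z
             - of_real y * exp (of_real ((1/2 - a) * y)) * (\<Sum>j=1..k. fact (j - 1) * exp z / z ^ j))
      = y * exp ((1/2 - a) * y) * norm (Eit z - (\<Sum>j=1..k. fact (j - 1) * exp z / z ^ j))"
    using y0 by (simp add: right_diff_distrib[symmetric] norm_mult)
  also have "\<dots> \<le> y * exp ((1/2 - a) * y) * (fact k * exp (Re z) / \<bar>Im z\<bar> ^ (k + 1))"
    using \<gamma> y0 Im_z by (intro mult_left_mono norm_Eit_minus_sum_le) auto
  also have "\<dots> = fact k * exp ((1/2 - \<beta>) * y) / (\<bar>\<gamma>\<bar> ^ (k + 1) * y ^ k)"
  proof -
    have "exp ((1/2 - a) * y) * exp ((a - \<beta>) * y) = exp ((1/2 - \<beta>) * y)"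
      unfolding exp_add[symmetric] by (simp add: algebra_simps)
    with Re_z Im_z show ?thesis
      using y0 \<gamma> by (simp only:) (simp add: power_mult_distrib field_simps)
  qed
  also have "\<dots> \<le> fact k * exp (\<epsilon> / 2) * exp ((1/2 - \<beta>) * \<omega>) / ((\<omega> - \<epsilon>) ^ k * \<bar>\<gamma>\<bar> ^ (k + 1))"
  proof (rule frac_le)
    have "(1/2 - \<beta>) * y = (1/2 - \<beta>) * (y - \<omega>) + (1/2 - \<beta>) * \<omega>" by algebra
    then have "exp ((1/2 - \<beta>) * y) \<le> exp (\<epsilon> / 2 + (1/2 - \<beta>) * \<omega>)"
      using half_minus_mult_le[OF \<beta> y] by simp
    then show "fact k * exp ((1/2 - \<beta>) * y) \<le> fact k * exp (\<epsilon> / 2) * exp ((1/2 - \<beta>) * \<omega>)"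
      by (simp add: exp_add mult.assoc)
    show "(\<omega> - \<epsilon>) ^ k * \<bar>\<gamma>\<bar> ^ (k + 1) \<le> \<bar>\<gamma>\<bar> ^ (k + 1) * y ^ k"
      using y_ge \<omega> by (subst mult.commute, intro mult_right_mono power_mono) auto
  qed (use \<omega> \<gamma> in auto)
  finally show ?thesis unfolding sum_eq z_def[symmetric] .
qed

lemma exp_half_minus_shift:
  fixes \<rho> :: complex
  shows "exp ((1/2 - \<rho>) * of_real (t + \<omega>)) = exp ((1/2 - \<rho>) * of_real \<omega>) * exp ((1/2 - \<rho>) * of_real t)"
  by (simp add: exp_add[symmetric] algebra_simps add_divide_distrib)

definition Khat_moment :: "(real \<Rightarrow> complex) \<Rightarrow> nat \<Rightarrow> complex \<Rightarrow> complex" where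
  "Khat_moment K n w = (\<integral>t. K t * ((- \<i> * of_real t) ^ n * exp (- \<i> * of_real t * w)) \<partial>lborel)"

locale unit_mass_kernel =
  fixes K :: "real \<Rightarrow> complex" and \<epsilon> :: real
  assumes eps_pos: "0 < \<epsilon>"
    and K_set_integrable: "set_integrable lborel {-\<epsilon>..\<epsilon>} K"
    and K_norm: "(LINT t:{-\<epsilon>..\<epsilon>}|lborel. norm (K t)) = 1"
    and K_supp: "\<And>t. t \<notin> {-\<epsilon>..\<epsilon>} \<Longrightarrow> K t = 0"
begin

lemma K_integrable: "integrable lborel K"
proof -
  have "indicator {-\<epsilon>..\<epsilon>} t *\<^sub>R K t = K t" for t
    using K_supp[of t] by (cases "t \<in> {-\<epsilon>..\<epsilon>}") auto
  then show ?thesis using K_set_integrable unfolding set_integrable_def by simp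
qed

lemma K_measurable [measurable]: "K \<in> borel_measurable lborel"
  using K_integrable by (rule borel_measurable_integrable)

lemma integral_norm_K: "(\<integral>t. norm (K t) \<partial>lborel) = 1"
proof -
  have "indicator {-\<epsilon>..\<epsilon>} t *\<^sub>R norm (K t) = norm (K t)" for t
    using K_supp[of t] by (cases "t \<in> {-\<epsilon>..\<epsilon>}") auto
  then show ?thesis using K_norm unfolding set_lebesgue_integral_def by presburger
qed

lemma norm_K_mult_le:
  assumes "\<And>s. s \<in> {-\<epsilon>..\<epsilon>} \<Longrightarrow> norm (g s) \<le> M"
  shows "norm (K t * g t) \<le> M * norm (K t)"
proof (cases "t \<in> {-\<epsilon>..\<epsilon>}")
  case True
  then show ?thesis using assms[of t] by (simp add: norm_mult mult.commute[of M] mult_left_mono)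
qed (simp add: K_supp)

lemma integrable_K_mult_bounded:
  fixes g :: "real \<Rightarrow> complex"
  assumes [measurable]: "g \<in> borel_measurable lborel"
    and g_le: "\<And>t. t \<in> {-\<epsilon>..\<epsilon>} \<Longrightarrow> norm (g t) \<le> M"
  shows "integrable lborel (\<lambda>t. K t * g t)"
proof (rule Bochner_Integration.integrable_bound[where f = "\<lambda>t. of_real M * K t"])
  show "integrable lborel (\<lambda>t. of_real M * K t)" using K_integrable by simp
  have "0 \<le> M" using g_le[of 0] eps_pos by (meson atLeastAtMost_iff norm_ge_zero order_trans neg_le_0_iff_le less_imp_le)
  then show "AE t in lborel. norm (K t * g t) \<le> norm (of_real M * K t)"
    using norm_K_mult_le[of g M, OF g_le] by (intro AE_I2) (simp add: norm_mult)
qed measurable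

lemma norm_integral_K_mult_le:
  fixes g :: "real \<Rightarrow> complex"
  assumes "g \<in> borel_measurable lborel"
    and g_le: "\<And>t. t \<in> {-\<epsilon>..\<epsilon>} \<Longrightarrow> norm (g t) \<le> M"
  shows "norm (\<integral>t. K t * g t \<partial>lborel) \<le> M"
proof -
  have "norm (\<integral>t. K t * g t \<partial>lborel) \<le> (\<integral>t. M * norm (K t) \<partial>lborel)"
    using integrable_K_mult_bounded[OF assms] K_integrable norm_K_mult_le[of g M, OF g_le]
    by (intro Bochner_Integration.integral_norm_bound_integral) auto
  also have "\<dots> = M" using integral_norm_K by simp
  finally show ?thesis .
qed

lemma integrable_K_mult_continuous:
  fixes g :: "real \<Rightarrow> complex"
  assumes "g \<in> borel_measurable lborel" and "continuous_on {-\<epsilon>..\<epsilon>} g"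
  shows "integrable lborel (\<lambda>t. K t * g t)"
proof -
  obtain M where "\<forall>x\<in>g ` {-\<epsilon>..\<epsilon>}. norm x \<le> M"
    using compact_imp_bounded[OF compact_continuous_image[OF assms(2) compact_Icc]]
    unfolding bounded_iff by blast
  then show ?thesis using integrable_K_mult_bounded[OF assms(1), of M] by auto
qed

lemma set_integral_K_shift:
  fixes g :: "real \<Rightarrow> complex"
  shows "(LINT y:{\<omega>-\<epsilon>..\<omega>+\<epsilon>}|lborel. K (y - \<omega>) * g y) = (\<integral>t. K t * g (t + \<omega>) \<partial>lborel)"
proof -
  have "(LINT y:{\<omega>-\<epsilon>..\<omega>+\<epsilon>}|lborel. K (y - \<omega>) * g y)
      = \<bar>1\<bar> *\<^sub>R (\<integral>t. indicator {\<omega>-\<epsilon>..\<omega>+\<epsilon>} (\<omega> + 1 * t) *\<^sub>R (K ((\<omega> + 1 * t) - \<omega>) * g (\<omega> + 1 * t)) \<partial>lborel)"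
    unfolding set_lebesgue_integral_def by (rule lborel_integral_real_affine) simp
  also have "\<dots> = (\<integral>t. K t * g (t + \<omega>) \<partial>lborel)"
  proof -
    have "indicator {\<omega>-\<epsilon>..\<omega>+\<epsilon>} (\<omega> + t) *\<^sub>R (K t * g (\<omega> + t)) = K t * g (t + \<omega>)" for t
      using K_supp[of t] by (cases "t \<in> {-\<epsilon>..\<epsilon>}") (auto simp: indicator_def add.commute)
    then show ?thesis by simp
  qed
  finally show ?thesis .
qed

lemma integrable_Khat_moment:
  "integrable lborel (\<lambda>t. K t * ((- \<i> * of_real t) ^ n * exp (- \<i> * of_real t * w)))"
  by (rule integrable_K_mult_continuous) (measurable, intro continuous_intros)

lemma Khat_moment_increment_eq:
  "Khat_moment K n (w + h) - Khat_moment K n w - h * Khat_moment K (Suc n) w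
     = (\<integral>t. K t * ((- \<i> * of_real t) ^ n * exp (- \<i> * of_real t * w)
                     * (exp (- \<i> * of_real t * h) - 1 - (- \<i> * of_real t * h))) \<partial>lborel)"
proof -
  let ?a = "\<lambda>w t. K t * ((- \<i> * of_real t) ^ n * exp (- \<i> * of_real t * w))"
  let ?b = "\<lambda>t. h * (K t * ((- \<i> * of_real t) ^ Suc n * exp (- \<i> * of_real t * w)))"
  have a_int: "integrable lborel (?a v)" for v by (rule integrable_Khat_moment)
  have b_int: "integrable lborel ?b"
    by (rule Bochner_Integration.integrable_mult_right, rule integrable_Khat_moment)
  have "(\<integral>t. ?a (w + h) t - ?a w t - ?b t \<partial>lborel)
      = integral\<^sup>L lborel (?a (w + h)) - integral\<^sup>L lborel (?a w) - integral\<^sup>L lborel ?b"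
    by (simp only: Bochner_Integration.integral_diff[OF Bochner_Integration.integrable_diff[OF a_int a_int] b_int]
        Bochner_Integration.integral_diff[OF a_int a_int])
  then have "Khat_moment K n (w + h) - Khat_moment K n w - h * Khat_moment K (Suc n) w
      = (\<integral>t. ?a (w + h) t - ?a w t - ?b t \<partial>lborel)"
    unfolding Khat_moment_def by simp
  also have "\<dots> = (\<integral>t. K t * ((- \<i> * of_real t) ^ n * exp (- \<i> * of_real t * w)
                     * (exp (- \<i> * of_real t * h) - 1 - (- \<i> * of_real t * h))) \<partial>lborel)"
  proof (intro Bochner_Integration.integral_cong refl)
    fix t :: real
    have "exp (- \<i> * of_real t * (w + h)) = exp (- \<i> * of_real t * w) * exp (- \<i> * of_real t * h)"
      by (simp add: exp_add[symmetric] algebra_simps)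
    then show "?a (w + h) t - ?a w t - ?b t = K t * ((- \<i> * of_real t) ^ n * exp (- \<i> * of_real t * w)
                     * (exp (- \<i> * of_real t * h) - 1 - (- \<i> * of_real t * h)))"
      by (simp add: algebra_simps)
  qed
  finally show ?thesis .
qed

lemma norm_Khat_moment_increment_le:
  assumes h: "\<epsilon> * norm h \<le> 1"
  shows "norm (Khat_moment K n (w + h) - Khat_moment K n w - h * Khat_moment K (Suc n) w)
           \<le> \<epsilon> ^ n * exp (\<epsilon> * \<bar>Im w\<bar>) * (\<epsilon> * norm h) ^ 2"
  unfolding Khat_moment_increment_eq
proof (rule norm_integral_K_mult_le)
  fix t :: real
  assume "t \<in> {-\<epsilon>..\<epsilon>}"
  then have t: "\<bar>t\<bar> \<le> \<epsilon>" by auto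
  have "norm ((- \<i> * of_real t) ^ n) \<le> \<epsilon> ^ n"
    using t by (simp add: norm_power norm_mult power_mono)
  moreover have "norm (exp (- \<i> * of_real t * w)) \<le> exp (\<epsilon> * \<bar>Im w\<bar>)"
  proof -
    have "t * Im w \<le> \<epsilon> * \<bar>Im w\<bar>"
      using mult_mono[OF t order_refl[of "\<bar>Im w\<bar>"]] abs_ge_self[of "t * Im w"] eps_pos
      by (simp add: abs_mult)
    then show ?thesis by simp
  qed
  moreover have "norm (exp (- \<i> * of_real t * h) - 1 - (- \<i> * of_real t * h)) \<le> (\<epsilon> * norm h) ^ 2"
  proof -
    have "norm (- \<i> * of_real t * h) \<le> \<epsilon> * norm h"
      using t by (simp add: norm_mult mult_right_mono)
    then show ?thesis
      using norm_exp_minus_one_minus_le[of "- \<i> * of_real t * h"] h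
      by (smt (verit) norm_ge_zero power_mono)
  qed
  ultimately show "norm ((- \<i> * of_real t) ^ n * exp (- \<i> * of_real t * w)
                     * (exp (- \<i> * of_real t * h) - 1 - (- \<i> * of_real t * h)))
      \<le> \<epsilon> ^ n * exp (\<epsilon> * \<bar>Im w\<bar>) * (\<epsilon> * norm h) ^ 2"
    unfolding norm_mult using eps_pos by (intro mult_mono) auto
qed measurable

text \<open>Differentiation under the integral sign: the second-order Taylor remainder of
  \<open>exp (- \<i> t h)\<close> is \<open>O(h\<^sup>2)\<close> uniformly on the support of \<open>K\<close>.\<close>
lemma Khat_moment_has_field_derivative:
  "(Khat_moment K n has_field_derivative Khat_moment K (Suc n) w) (at w)"
  unfolding DERIV_def
proof -
  define C where "C = \<epsilon> ^ (n + 2) * exp (\<epsilon> * \<bar>Im w\<bar>)"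
  define Q where "Q h = (Khat_moment K n (w + h) - Khat_moment K n w) / h - Khat_moment K (Suc n) w" for h
  have Q_le: "norm (Q h) \<le> C * norm h" if h0: "h \<noteq> 0" and h: "norm h < 1 / \<epsilon>" for h
  proof -
    have "Q h = (Khat_moment K n (w + h) - Khat_moment K n w - h * Khat_moment K (Suc n) w) / h"
      unfolding Q_def using h0 by (simp add: field_simps)
    moreover have "\<epsilon> * norm h \<le> 1" using h eps_pos by (simp add: field_simps)
    ultimately have "norm (Q h) \<le> \<epsilon> ^ n * exp (\<epsilon> * \<bar>Im w\<bar>) * (\<epsilon> * norm h) ^ 2 / norm h"
      using norm_Khat_moment_increment_le h0 by (simp add: norm_divide divide_right_mono)
    also have "\<dots> = C * norm h"
      unfolding C_def using h0 by (simp add: power2_eq_square field_simps)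
    finally show ?thesis .
  qed
  have "(Q \<longlongrightarrow> 0) (at 0)"
  proof (rule Lim_null_comparison)
    show "\<forall>\<^sub>F h in at 0. norm (Q h) \<le> C * norm h"
      unfolding eventually_at using eps_pos Q_le by (intro exI[of _ "1 / \<epsilon>"]) auto
    show "((\<lambda>h. C * norm h) \<longlongrightarrow> 0) (at (0::complex))"
      by (intro tendsto_mult_right_zero tendsto_norm_zero tendsto_ident_at)
  qed
  then have "((\<lambda>h. Q h + Khat_moment K (Suc n) w) \<longlongrightarrow> 0 + Khat_moment K (Suc n) w) (at 0)"
    by (intro tendsto_add tendsto_const)
  then show "((\<lambda>h. (Khat_moment K n (w + h) - Khat_moment K n w) / h) \<longlongrightarrow> Khat_moment K (Suc n) w) (at 0)"
    unfolding Q_def by simp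
qed

lemma higher_deriv_Khat: "(deriv ^^ n) (Khat K) = Khat_moment K n"
proof (induction n)
  case 0
  then show ?case unfolding Khat_def Khat_moment_def by (simp add: fun_eq_iff)
next
  case (Suc n)
  then have "(deriv ^^ Suc n) (Khat K) = deriv (Khat_moment K n)" by simp
  then show ?case using DERIV_imp_deriv[OF Khat_moment_has_field_derivative] by (simp add: fun_eq_iff)
qed

lemma higher_deriv_Khat_at:
  "(- \<i>) ^ n * (deriv ^^ n) (Khat K) (\<rho> / \<i> - 1 / (2 * \<i>))
     = (\<integral>t. K t * (of_real ((- t) ^ n) * exp ((1/2 - \<rho>) * of_real t)) \<partial>lborel)"
proof -
  have "(- \<i>) ^ n * (- \<i> * of_real t) ^ n = of_real ((- t) ^ n)" for t
    by (simp add: power_mult_distrib[symmetric])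
  moreover have "- \<i> * of_real t * (\<rho> / \<i> - 1 / (2 * \<i>)) = (1/2 - \<rho>) * of_real t" for t
    by (simp add: field_simps)
  ultimately have pointwise: "(- \<i>) ^ n * (K t * ((- \<i> * of_real t) ^ n * exp (- \<i> * of_real t * (\<rho> / \<i> - 1 / (2 * \<i>)))))
      = K t * (of_real ((- t) ^ n) * exp ((1/2 - \<rho>) * of_real t))" for t
    by (metis (no_types, lifting) mult.assoc mult.left_commute)
  have "(- \<i>) ^ n * (deriv ^^ n) (Khat K) (\<rho> / \<i> - 1 / (2 * \<i>))
      = (\<integral>t. (- \<i>) ^ n * (K t * ((- \<i> * of_real t) ^ n * exp (- \<i> * of_real t * (\<rho> / \<i> - 1 / (2 * \<i>))))) \<partial>lborel)"
    unfolding higher_deriv_Khat Khat_moment_def by (rule integral_mult_right_zero[symmetric])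
  also have "\<dots> = (\<integral>t. K t * (of_real ((- t) ^ n) * exp ((1/2 - \<rho>) * of_real t)) \<partial>lborel)"
    by (simp only: pointwise)
  finally show ?thesis .
qed

lemma Fneg_shift:
  "Fneg K \<epsilon> \<omega> \<rho> j
     = (-1) ^ j * (\<integral>t. K t * (of_real (1 / (t + \<omega>) ^ (j - 1)) * exp ((1/2 - \<rho>) * of_real (t + \<omega>))) \<partial>lborel)"
proof -
  have "Fneg K \<epsilon> \<omega> \<rho> j = (-1) ^ j * (LINT y:{\<omega>-\<epsilon>..\<omega>+\<epsilon>}|lborel.
      K (y - \<omega>) * (of_real (1 / y ^ (j - 1)) * exp ((1/2 - \<rho>) * of_real y)))"
    unfolding Fneg_def by (simp add: ac_simps)
  then show ?thesis by (simp only: set_integral_K_shift)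
qed

lemma Fneg_one:
  "Fneg K \<epsilon> \<omega> \<rho> 1 = - exp ((1/2 - \<rho>) * of_real \<omega>) * Khat K (\<rho> / \<i> - 1 / (2 * \<i>))"
proof -
  have "Fneg K \<epsilon> \<omega> \<rho> 1 = - (\<integral>t. exp ((1/2 - \<rho>) * of_real \<omega>) * (K t * exp ((1/2 - \<rho>) * of_real t)) \<partial>lborel)"
    unfolding Fneg_shift exp_half_minus_shift by (simp add: ac_simps)
  also have "\<dots> = - exp ((1/2 - \<rho>) * of_real \<omega>) * (\<integral>t. K t * (of_real ((- t) ^ 0) * exp ((1/2 - \<rho>) * of_real t)) \<partial>lborel)"
    by simp
  also have "\<dots> = - exp ((1/2 - \<rho>) * of_real \<omega>) * Khat K (\<rho> / \<i> - 1 / (2 * \<i>))"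
    using higher_deriv_Khat_at[of 0 \<rho>] by simp
  finally show ?thesis .
qed

lemma Phi_expansion:
  fixes \<omega> a \<beta> \<gamma> :: real
  assumes \<omega>: "\<epsilon> < \<omega>" and \<beta>: "0 \<le> \<beta>" "\<beta> \<le> 1" and \<gamma>: "\<gamma> \<noteq> 0"
  defines "\<rho> \<equiv> Complex \<beta> \<gamma>"
  shows "cmod (Phi K \<epsilon> \<omega> \<rho> a
                 - (\<Sum>j=1..k. of_nat (fact (j - 1)) * Fneg K \<epsilon> \<omega> \<rho> j / (\<rho> - of_real a) ^ j))
           \<le> fact k * exp (\<epsilon> / 2) * exp ((1/2 - \<beta>) * \<omega>) / ((\<omega> - \<epsilon>) ^ k * \<bar>\<gamma>\<bar> ^ (k + 1))"
proof -
  define P where "P y = of_real y * exp (of_real ((1/2 - a) * y)) * Eit ((of_real a - \<rho>) * of_real y)" for y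
  define Q where "Q j y = of_real (1 / y ^ (j - 1)) * exp ((1/2 - \<rho>) * of_real y)" for j y
  define c where "c j = fact (j - 1) * (-1) ^ j / (\<rho> - of_real a) ^ j" for j
  define S where "S y = (\<Sum>j=1..k. c j * Q j y)" for y
  have Q_int: "integrable lborel (\<lambda>t. K t * Q j (t + \<omega>))" for j
    unfolding Q_def using \<omega>
    by (intro integrable_K_mult_continuous) (measurable, intro continuous_intros, auto)
  have S_int: "integrable lborel (\<lambda>t. K t * S (t + \<omega>))"
    unfolding S_def sum_distrib_left mult.left_commute[of "K _"] using Q_int by simp
  have "(\<Sum>j=1..k. of_nat (fact (j - 1)) * Fneg K \<epsilon> \<omega> \<rho> j / (\<rho> - of_real a) ^ j)
      = (\<Sum>j=1..k. c j * (\<integral>t. K t * Q j (t + \<omega>) \<partial>lborel))"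
    unfolding Fneg_shift c_def Q_def by (intro sum.cong refl) (simp add: ac_simps)
  also have "\<dots> = (\<integral>t. K t * S (t + \<omega>) \<partial>lborel)"
    unfolding S_def sum_distrib_left mult.left_commute[of "K _"] using Q_int by simp
  finally have sum_eq: "(\<Sum>j=1..k. of_nat (fact (j - 1)) * Fneg K \<epsilon> \<omega> \<rho> j / (\<rho> - of_real a) ^ j)
      = (\<integral>t. K t * S (t + \<omega>) \<partial>lborel)" .
  define B where "B = fact k * exp (\<epsilon> / 2) * exp ((1/2 - \<beta>) * \<omega>) / ((\<omega> - \<epsilon>) ^ k * \<bar>\<gamma>\<bar> ^ (k + 1))"
  have D_meas: "(\<lambda>t. P (t + \<omega>) - S (t + \<omega>)) \<in> borel_measurable lborel"
    unfolding P_def S_def Q_def Eit_def set_lebesgue_integral_def by measurable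
  have D_le: "norm (P (t + \<omega>) - S (t + \<omega>)) \<le> B" if "t \<in> {-\<epsilon>..\<epsilon>}" for t
  proof -
    have "\<bar>(t + \<omega>) - \<omega>\<bar> \<le> \<epsilon>" using that by auto
    from Phi_integrand_remainder_le[OF \<omega> \<beta> \<gamma> this, of a k]
    show ?thesis unfolding P_def S_def Q_def c_def B_def \<rho>_def by (simp add: ac_simps)
  qed
  have "Phi K \<epsilon> \<omega> \<rho> a = (LINT y:{\<omega>-\<epsilon>..\<omega>+\<epsilon>}|lborel. K (y - \<omega>) * P y)"
    unfolding Phi_def P_def by (simp add: mult.assoc)
  also have "\<dots> = (\<integral>t. K t * S (t + \<omega>) + K t * (P (t + \<omega>) - S (t + \<omega>)) \<partial>lborel)"
    unfolding set_integral_K_shift by (simp add: algebra_simps)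
  also have "\<dots> = (\<integral>t. K t * S (t + \<omega>) \<partial>lborel) + (\<integral>t. K t * (P (t + \<omega>) - S (t + \<omega>)) \<partial>lborel)"
    using S_int integrable_K_mult_bounded[OF D_meas D_le] by (rule Bochner_Integration.integral_add)
  finally show ?thesis
    using norm_integral_K_mult_le[OF D_meas D_le] unfolding sum_eq B_def by simp
qed

lemma sum_higher_deriv_Khat_eq:
  fixes \<omega> :: real
  assumes "\<omega> \<noteq> 0"
  shows "(\<Sum>n=0..m. of_nat ((n + j - 2) choose n) * (- \<i>) ^ n
                        * (deriv ^^ n) (Khat K) (\<rho> / \<i> - 1 / (2 * \<i>)) / of_real (\<omega> ^ (n + j - 1)))
      = (\<integral>t. K t * (of_real (\<Sum>n=0..m. real ((n + j - 2) choose n) * (- t) ^ n / \<omega> ^ (n + j - 1))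
                     * exp ((1/2 - \<rho>) * of_real t)) \<partial>lborel)"
proof -
  define c where "c n t = real ((n + j - 2) choose n) * (- t) ^ n / \<omega> ^ (n + j - 1)" for n t
  define e where "e t = exp ((1/2 - \<rho>) * of_real t)" for t
  have c_int: "integrable lborel (\<lambda>t. K t * (of_real (c n t) * e t))" for n
    unfolding c_def e_def using assms
    by (intro integrable_K_mult_continuous) (measurable, intro continuous_intros, auto)
  have "(\<Sum>n=0..m. of_nat ((n + j - 2) choose n) * (- \<i>) ^ n
                        * (deriv ^^ n) (Khat K) (\<rho> / \<i> - 1 / (2 * \<i>)) / of_real (\<omega> ^ (n + j - 1)))
      = (\<Sum>n=0..m. (\<integral>t. K t * (of_real (c n t) * e t) \<partial>lborel))"
  proof (intro sum.cong refl)
    fix n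
    have "of_nat ((n + j - 2) choose n) * (- \<i>) ^ n * (deriv ^^ n) (Khat K) (\<rho> / \<i> - 1 / (2 * \<i>))
            / of_real (\<omega> ^ (n + j - 1))
        = of_real (real ((n + j - 2) choose n) / \<omega> ^ (n + j - 1))
            * (\<integral>t. K t * (of_real ((- t) ^ n) * e t) \<partial>lborel)"
      unfolding e_def higher_deriv_Khat_at[symmetric] by simp
    also have "\<dots> = (\<integral>t. K t * (of_real (c n t) * e t) \<partial>lborel)"
      unfolding c_def integral_mult_right_zero[symmetric] by (simp add: ac_simps)
    finally show "of_nat ((n + j - 2) choose n) * (- \<i>) ^ n * (deriv ^^ n) (Khat K) (\<rho> / \<i> - 1 / (2 * \<i>))
            / of_real (\<omega> ^ (n + j - 1)) = (\<integral>t. K t * (of_real (c n t) * e t) \<partial>lborel)" .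
  qed
  also have "\<dots> = (\<integral>t. K t * (of_real (\<Sum>n=0..m. c n t) * e t) \<partial>lborel)"
    using c_int by (simp add: sum_distrib_left sum_distrib_right)
  finally show ?thesis unfolding c_def e_def .
qed

lemma Fneg_expansion:
  fixes \<omega> \<beta> \<gamma> :: real
  assumes \<omega>: "exp 1 * \<epsilon> < \<omega>" and j: "j \<ge> 2" and \<beta>: "0 \<le> \<beta>" "\<beta> \<le> 1"
  defines "\<rho> \<equiv> Complex \<beta> \<gamma>"
  shows "cmod (Fneg K \<epsilon> \<omega> \<rho> j
                 - (-1) ^ j * exp ((1/2 - \<rho>) * of_real \<omega>)
                   * (\<Sum>n=0..m. of_nat ((n + j - 2) choose n) * (- \<i>) ^ n
                        * (deriv ^^ n) (Khat K) (\<rho> / \<i> - 1 / (2 * \<i>)) / of_real (\<omega> ^ (n + j - 1))))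
          \<le> exp (real j - 2 + \<epsilon> / 2) * exp ((1/2 - \<beta>) * \<omega>) / \<omega> ^ (j - 1)
              * ((exp 1 * \<epsilon> / \<omega>) ^ (m + 1) / (1 - exp 1 * \<epsilon> / \<omega>))"
proof -
  define E where "E = exp ((1/2 - \<rho>) * of_real \<omega>)"
  define e where "e t = exp ((1/2 - \<rho>) * of_real t)" for t
  define A where "A t = 1 / (t + \<omega>) ^ (j - 1)" for t
  define c where "c n t = real ((n + j - 2) choose n) * (- t) ^ n / \<omega> ^ (n + j - 1)" for n t
  define R where "R = exp 1 ^ (j - 2) / \<omega> ^ (j - 1) * ((exp 1 * \<epsilon> / \<omega>) ^ (m + 1) / (1 - exp 1 * \<epsilon> / \<omega>))"
  have "\<epsilon> \<le> exp 1 * \<epsilon>" using eps_pos by (simp add: mult_le_cancel_right1)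
  then have \<omega>_gt: "\<omega> > \<epsilon>" using \<omega> by linarith
  have A_int: "integrable lborel (\<lambda>t. K t * (of_real (A t) * e t))"
    unfolding A_def e_def using \<omega>_gt eps_pos
    by (intro integrable_K_mult_continuous) (measurable, intro continuous_intros, auto)
  have sum_eq: "(\<Sum>n=0..m. of_nat ((n + j - 2) choose n) * (- \<i>) ^ n
                        * (deriv ^^ n) (Khat K) (\<rho> / \<i> - 1 / (2 * \<i>)) / of_real (\<omega> ^ (n + j - 1)))
      = (\<integral>t. K t * (of_real (\<Sum>n=0..m. c n t) * e t) \<partial>lborel)"
    unfolding c_def e_def using \<omega>_gt eps_pos by (intro sum_higher_deriv_Khat_eq) simp
  have Fneg_eq: "Fneg K \<epsilon> \<omega> \<rho> j = (-1) ^ j * E * (\<integral>t. K t * (of_real (A t) * e t) \<partial>lborel)"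
  proof -
    have "Fneg K \<epsilon> \<omega> \<rho> j = (-1) ^ j * (\<integral>t. E * (K t * (of_real (A t) * e t)) \<partial>lborel)"
      unfolding Fneg_shift exp_half_minus_shift A_def e_def E_def by (simp only: mult_ac)
    then show ?thesis by simp
  qed
  have sum_int: "integrable lborel (\<lambda>t. K t * (of_real (\<Sum>n=0..m. c n t) * e t))"
    unfolding c_def e_def using \<omega>_gt eps_pos
    by (intro integrable_K_mult_continuous) (measurable, intro continuous_intros, auto)
  have diff: "Fneg K \<epsilon> \<omega> \<rho> j - (-1) ^ j * E * (\<integral>t. K t * (of_real (\<Sum>n=0..m. c n t) * e t) \<partial>lborel)
      = (-1) ^ j * E * (\<integral>t. K t * (of_real (A t - (\<Sum>n=0..m. c n t)) * e t) \<partial>lborel)"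
  proof -
    have "(\<integral>t. K t * (of_real (A t - (\<Sum>n=0..m. c n t)) * e t) \<partial>lborel)
        = (\<integral>t. K t * (of_real (A t) * e t) - K t * (of_real (\<Sum>n=0..m. c n t) * e t) \<partial>lborel)"
      by (simp add: algebra_simps)
    also have "\<dots> = (\<integral>t. K t * (of_real (A t) * e t) \<partial>lborel) - (\<integral>t. K t * (of_real (\<Sum>n=0..m. c n t) * e t) \<partial>lborel)"
      by (rule Bochner_Integration.integral_diff[OF A_int sum_int])
    finally show ?thesis unfolding Fneg_eq by (simp only: right_diff_distrib)
  qed
  have bound: "norm (\<integral>t. K t * (of_real (A t - (\<Sum>n=0..m. c n t)) * e t) \<partial>lborel) \<le> R * exp (\<epsilon> / 2)"
  proof (rule norm_integral_K_mult_le)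
    show "(\<lambda>t. of_real (A t - (\<Sum>n=0..m. c n t)) * e t) \<in> borel_measurable lborel"
      unfolding A_def c_def e_def by measurable
    fix t :: real
    assume "t \<in> {-\<epsilon>..\<epsilon>}"
    then show "norm (of_real (A t - (\<Sum>n=0..m. c n t)) * e t) \<le> R * exp (\<epsilon> / 2)"
      unfolding A_def c_def e_def R_def \<rho>_def using eps_pos
      by (intro Fneg_integrand_remainder_le[OF _ \<omega> j \<beta>]) auto
  qed
  have norm_E: "norm E = exp ((1/2 - \<beta>) * \<omega>)" unfolding E_def \<rho>_def by simp
  have "cmod (Fneg K \<epsilon> \<omega> \<rho> j - (-1) ^ j * E * (\<integral>t. K t * (of_real (\<Sum>n=0..m. c n t) * e t) \<partial>lborel))
      \<le> exp ((1/2 - \<beta>) * \<omega>) * (R * exp (\<epsilon> / 2))"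
    unfolding diff norm_mult norm_E norm_power norm_minus_cancel norm_one power_one mult_1_left
    by (rule mult_left_mono[OF bound]) simp
  also have "\<dots> = exp (real j - 2 + \<epsilon> / 2) * exp ((1/2 - \<beta>) * \<omega>) / \<omega> ^ (j - 1)
              * ((exp 1 * \<epsilon> / \<omega>) ^ (m + 1) / (1 - exp 1 * \<epsilon> / \<omega>))"
  proof -
    have "exp (real j - 2 + \<epsilon> / 2) = exp 1 ^ (j - 2) * exp (\<epsilon> / 2)"
      using j exp_of_nat_mult[of "j - 2" 1] by (simp add: exp_add of_nat_diff)
    then show ?thesis
      unfolding R_def by (simp only: mult_ac times_divide_eq_right times_divide_eq_left divide_divide_eq_left)
  qed
  finally show ?thesis unfolding sum_eq E_def .
qed

end

theorem lemma3:
  fixes K :: "real \<Rightarrow> complex" and \<epsilon> \<omega> a \<beta> \<gamma> :: real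
  assumes eps: "0 < \<epsilon>" "\<epsilon> < \<omega>"
    and K_int: "set_integrable lborel {-\<epsilon>..\<epsilon>} K"
    and K_norm: "(LINT t:{-\<epsilon>..\<epsilon>}|lborel. norm (K t)) = 1"
    and K_supp: "\<And>t. t \<notin> {-\<epsilon>..\<epsilon>} \<Longrightarrow> K t = 0"
    and a: "0 \<le> a" "a \<le> 1"
    and \<beta>: "0 \<le> \<beta>" "\<beta> \<le> 1"
    and \<gamma>: "\<gamma> \<noteq> 0"
  shows "(\<forall>k::nat. k \<ge> 1 \<longrightarrow>
           cmod (Phi K \<epsilon> \<omega> (Complex \<beta> \<gamma>) a
                 - (\<Sum>j=1..k. of_nat (fact (j - 1)) * Fneg K \<epsilon> \<omega> (Complex \<beta> \<gamma>) j
                               / (Complex \<beta> \<gamma> - complex_of_real a) ^ j))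
           \<le> fact k * exp (\<epsilon> / 2) * exp ((1/2 - \<beta>) * \<omega>)
               / ((\<omega> - \<epsilon>) ^ k * \<bar>\<gamma>\<bar> ^ (k + 1)))
       \<and> Fneg K \<epsilon> \<omega> (Complex \<beta> \<gamma>) 1
           = - exp ((1/2 - Complex \<beta> \<gamma>) * complex_of_real \<omega>)
               * Khat K (Complex \<beta> \<gamma> / \<i> - 1 / (2 * \<i>))
       \<and> (exp 1 * \<epsilon> < \<omega> \<longrightarrow>
           (\<forall>j::nat. \<forall>m::nat. j \<ge> 2 \<longrightarrow>
              cmod (Fneg K \<epsilon> \<omega> (Complex \<beta> \<gamma>) j
                 - (-1) ^ j * exp ((1/2 - Complex \<beta> \<gamma>) * complex_of_real \<omega>)
                   * (\<Sum>n=0..m. of_nat ((n + j - 2) choose n) * (- \<i>) ^ n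
                        * (deriv ^^ n) (Khat K) (Complex \<beta> \<gamma> / \<i> - 1 / (2 * \<i>))
                        / complex_of_real (\<omega> ^ (n + j - 1))))
              \<le> exp (real j - 2 + \<epsilon> / 2) * exp ((1/2 - \<beta>) * \<omega>) / \<omega> ^ (j - 1)
                  * ((exp 1 * \<epsilon> / \<omega>) ^ (m + 1) / (1 - exp 1 * \<epsilon> / \<omega>))))"
proof -
  interpret unit_mass_kernel K \<epsilon>
    using eps K_int K_norm K_supp by unfold_locales auto
  show ?thesis
    using Phi_expansion[OF eps(2) \<beta> \<gamma>] Fneg_one Fneg_expansion[OF _ _ \<beta>] by blast
qed

end
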